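(* Consider the closed-loop system $\Sigma$: $\dot x(t)=f\big(x(t),k(x(t_{k(t)}))\big)$ described in the context, with control update sequence $\{t_k\}$ generated by the rule based on the condition $\gamma_2(4\|e(t)\|)\le\lambda(1-c)V(x(t))$, $c\in(0,1)$, where during DoS intervals update attempts are repeated at the sampling times (so that updates may be delayed beyond the end of a DoS interval). Assume: (A1) $\lim_{n\to\infty}h_n=\infty$ and there exist $\kappa\ge0$, $\tau>0$ with $|\Xi(t)|\le\kappa+t/\tau$ for all $t\ge0$; (A2) there exists $\mu>0$ with $\gamma_2(4r)\le\mu\,\alpha_1(r)$ for all $r\ge0$. Let $\Delta_*:=\sup_{n\in\mathbb N}\Delta_{\mathbb S_n}$ and $\tau_*:=\inf_{n\in\mathbb N}\tau_n>0$. If $$\tau>\frac{c\lambda}{\lambda+2\mu}\Big(1+\frac{\Delta_*}{\tau_*}\Big),$$ then for all $t\ge0$ $$\|x(t)\|\le\alpha_1^{-1}\big(\gamma\,e^{-\beta t}\,\alpha_2(\|x(0)\|)\big),$$ where $\gamma=e^{\kappa(\lambda+2\mu)(1+\Delta_*/\tau_* )}$ and $\beta=c\lambda-\frac{\lambda+2\mu}{\tau}\big(1+\frac{\Delta_*}{\tau_*}\big)$.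
   Context: Plant: $\dot x=f(x,u)$, $x\in\mathbb R^{n_x}$. There is a smooth feedback $u=k(x)$, a smooth function $V$, class $\mathcal K_\infty$ functions $\alpha_1,\alpha_2,\gamma_2$ and $\lambda>0$ such that for all $x,e$: $\alpha_1(\|x\|)\le V(x)\le\alpha_2(\|x\|)$ and $\nabla V(x)f(x,k(x+e))\le-\lambda V(x)+\gamma_2(\|e\|)$. Norms are Euclidean. DoS: a sequence $\{h_n\}_{n\in\mathbb N}$, $h_0\ge0$, and durations $\tau_n>0$ define DoS intervals $H_n=[h_n,h_n+\tau_n[$ during which no information is transmitted from sensor to actuator. $\Theta(t):=[0,t]\setminus\bigcup_n H_n$ and $\Xi(t):=\bigcup_n H_n\cap[0,t]$, with $|\Xi(t)|$ its total length. Given control update times $\{t_k\}_{k\in\mathbb N}$ with $t_0=0$, let $k(t):=-1$ if $\Theta(t)=\emptyset$ and otherwise $k(t):=\sup\{k\in\mathbb N: t_k\in\Theta(t)\}$ (last successful update); with the convention $x(t_{-1}):=0$. The applied input is $u(t)=k(x(t_{k(t)}))$, and $e(t):=x(t_{k(t)})-x(t)$. Outside DoS, the next update time after $t_k$ is the infimal time larger than $t_k$ at which $\gamma_2(4\|e(t)\|)\le\lambda(1-c)V(x(t))$ is violated. Notation: $\Delta_k:=t_{k+1}-t_k$; $\mathbb S_n:=\{k\in\mathbb N: t_k\in H_n\}$ (update attempts during $H_n$); $\Delta_{\mathbb S_n}:=\sup_{k\in\mathbb S_n}\Delta_k$; $\bar H_n:=[h_n,h_n+\tau_n+\Delta_{\mathbb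 S_n}[$ bounds the $n$-th interval over which the control is not updated. *)

theory Defs
  imports "HOL-Analysis.Analysis"
begin

definition class_K_inf :: "(real \<Rightarrow> real) \<Rightarrow> bool" where
  "class_K_inf a \<longleftrightarrow> continuous_on {0..} a \<and> a 0 = 0 \<and> strict_mono_on {0..} a
      \<and> filterlim a at_top at_top"

text \<open>DoS intervals H_n = [h_n, h_n + tau_n[ and their union.\<close>
definition dos_int :: "(nat \<Rightarrow> real) \<Rightarrow> (nat \<Rightarrow> real) \<Rightarrow> nat \<Rightarrow> real set" where
  "dos_int h dur n = {h n ..< h n + dur n}"

definition dos_set :: "(nat \<Rightarrow> real) \<Rightarrow> (nat \<Rightarrow> real) \<Rightarrow> real set" where
  "dos_set h dur = (\<Union>n. dos_int h dur n)"

definition Theta :: "(nat \<Rightarrow> real) \<Rightarrow> (nat \<Rightarrow> real) \<Rightarrow> real \<Rightarrow> real set" where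
  "Theta h dur t = {0..t} - dos_set h dur"

definition Xi :: "(nat \<Rightarrow> real) \<Rightarrow> (nat \<Rightarrow> real) \<Rightarrow> real \<Rightarrow> real set" where
  "Xi h dur t = dos_set h dur \<inter> {0..t}"

text \<open>Indices of successful updates up to time t; the last one is k(t).
  The held sample is x(t_{k(t)}), with the convention x(t_{-1}) = 0.\<close>
definition succ_upd :: "(nat \<Rightarrow> real) \<Rightarrow> (nat \<Rightarrow> real) \<Rightarrow> (nat \<Rightarrow> real) \<Rightarrow> real \<Rightarrow> nat set" where
  "succ_upd h dur tk t = {k. tk k \<in> Theta h dur t}"

definition held_sample ::
  "(real \<Rightarrow> 'a::zero) \<Rightarrow> (nat \<Rightarrow> real) \<Rightarrow> (nat \<Rightarrow> real) \<Rightarrow> (nat \<Rightarrow> real) \<Rightarrow> real \<Rightarrow> 'a" where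
  "held_sample x h dur tk t =
     (if succ_upd h dur tk t = {} then 0 else x (tk (Max (succ_upd h dur tk t))))"

text \<open>Delta_{S_n}: supremum of Delta_k over update attempts t_k in H_n (0 if there is none).\<close>
definition Delta_S :: "(nat \<Rightarrow> real) \<Rightarrow> (nat \<Rightarrow> real) \<Rightarrow> (nat \<Rightarrow> real) \<Rightarrow> nat \<Rightarrow> real" where
  "Delta_S h dur tk n =
     (if {k. tk k \<in> dos_int h dur n} = {} then 0
      else Sup ((\<lambda>k. tk (Suc k) - tk k) ` {k. tk k \<in> dos_int h dur n}))"

end

theory Submission
  imports Defs
begin

(* Along the solution, W(t) = V(x(t)) is compared with
     G(t) = exp (-c lam t + (lam + 2 mu) |B \<inter> [0,t]|) W(0),
   where B is the union of the DoS intervals H_n, each prolonged by Delta_{S_n}.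
   After a successful update the triggering rule keeps the sampling error small, so the ISS
   estimate makes W decay at rate c lam until the next update attempt.  During a run of failed
   attempts the held sample is the last successful one, which still satisfied the triggering
   rule at the start of the run; with (A2) this limits the growth of W to the rate
   lam + 2 mu - c lam as long as W exceeds its value at the start of the run, and the whole run
   lies in B.  Induction over the update attempts gives W <= G.  Finally each prolongation
   Delta_{S_n} is at most Delta_star / tau_star times tau_n, so
   |B \<inter> [0,t]| <= (1 + Delta_star / tau_star) |Xi(t)|,
   which (A1) bounds by kappa + t/tau. *)

lemma class_K_inf_mono: "class_K_inf a \<Longrightarrow> 0 \<le> u \<Longrightarrow> u \<le> v \<Longrightarrow> a u \<le> a v"
  unfolding class_K_inf_def
  by (metis atLeast_iff order.trans order_le_less strict_mono_onD)

lemma class_K_inf_nonneg: "class_K_inf a \<Longrightarrow> 0 \<le> u \<Longrightarrow> 0 \<le> a u"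
  using class_K_inf_mono[of a 0 u] unfolding class_K_inf_def by simp

lemma class_K_inf_add_le:
  assumes "class_K_inf a" "0 \<le> u" "0 \<le> v"
  shows "a (u + v) \<le> a (2 * u) + a (2 * v)"
  using class_K_inf_mono[OF assms(1), of "u + v" "2 * max u v"] assms
    class_K_inf_nonneg[OF assms(1), of "2 * u"] class_K_inf_nonneg[OF assms(1), of "2 * v"]
  by (cases "u \<le> v") (auto simp: max_def)

lemma class_K_inf_le_the_inv_into:
  assumes K: "class_K_inf a" and y: "0 \<le> y" and r: "0 \<le> r" and ar: "a r \<le> y"
  shows "r \<le> the_inv_into {0..} a y"
proof -
  have cont: "continuous_on {0..} a" and a0: "a 0 = 0" and mono: "strict_mono_on {0..} a"
    and lim: "filterlim a at_top at_top"
    using K by (auto simp: class_K_inf_def)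
  obtain b where b: "0 \<le> b" "y \<le> a b"
    using lim unfolding filterlim_at_top eventually_at_top_linorder
    by (metis linorder_linear order.trans max.cobounded1 max.cobounded2)
  obtain q where q: "0 \<le> q" "q \<le> b" "a q = y"
    using IVT'[of a 0 y b] a0 y b continuous_on_subset[OF cont, of "{0..b}"] by auto
  have "the_inv_into {0..} a y = q"
    using q by (intro the_inv_into_f_eq strict_mono_on_imp_inj_on[OF mono]) auto
  moreover have "r \<le> q"
    using strict_mono_onD[OF mono, of q r] q r ar by force
  ultimately show ?thesis by simp
qed

lemma nonpos_if_neg_right_of_zeros:
  fixes g :: "real \<Rightarrow> real"
  assumes cont: "continuous_on {a..b} g" and ga: "g a < 0"
    and zeros: "\<And>s. s \<in> {a..<b} \<Longrightarrow> g s = 0 \<Longrightarrow> \<exists>d>0. \<forall>u. s < u \<and> u < s + d \<longrightarrow> g u < 0"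
  shows "\<forall>t\<in>{a..b}. g t \<le> 0"
proof (rule ccontr)
  assume "\<not> ?thesis"
  then obtain t where t: "t \<in> {a..b}" "g t > 0" by auto
  define T where "T = {t\<in>{a..b}. g t > 0}"
  define s where "s = Inf T"
  have tT: "t \<in> T" using t by (simp add: T_def)
  have bdd: "bdd_below T" unfolding T_def by (rule bdd_belowI[of _ a]) auto
  have lowT: "\<And>u. u \<in> T \<Longrightarrow> s \<le> u" unfolding s_def using bdd by (simp add: cInf_lower)
  have near: "\<And>e. e > 0 \<Longrightarrow> \<exists>u\<in>T. u < s + e"
    using tT unfolding s_def by (subst cInf_less_iff[symmetric]) (auto simp: bdd)
  have sab: "s \<in> {a..b}"
    using lowT[OF tT] t unfolding s_def by (auto intro!: cInf_greatest tT simp: T_def)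
  have "g s \<le> 0"
  proof (rule ccontr)
    assume "\<not> g s \<le> 0"
    then have gs: "g s > 0" by simp
    then have "s \<noteq> a" using ga by auto
    obtain d where d: "d > 0" "\<forall>u\<in>{a..b}. dist u s < d \<longrightarrow> dist (g u) (g s) < g s"
      using cont sab gs unfolding continuous_on_iff by blast
    define u where "u = max a (s - d/2)"
    have u: "u \<in> {a..b}" "dist u s < d" "u < s"
      using \<open>s \<noteq> a\<close> d(1) sab by (auto simp: u_def dist_real_def)
    then have "\<bar>g u - g s\<bar> < g s" using d(2) by (simp add: dist_real_def)
    then have "u \<in> T" using u(1) by (auto simp: T_def)
    then show False using lowT u(3) by fastforce
  qed
  moreover have "\<not> g s < 0"
  proof
    assume gs: "g s < 0"
    obtain d where d: "d > 0" "\<forall>u\<in>{a..b}. dist u s < d \<longrightarrow> dist (g u) (g s) < - g s"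
      using cont sab gs unfolding continuous_on_iff by (metis neg_0_less_iff_less)
    obtain u where u: "u \<in> T" "u < s + d" using near d(1) by blast
    then have "dist u s < d" using lowT[OF u(1)] by (simp add: dist_real_def)
    then show False using d(2) u(1) by (auto simp: T_def dist_real_def)
  qed
  ultimately have gs0: "g s = 0" by simp
  then have "s < b" using lowT[OF tT] t by (cases "s = t") auto
  then obtain d where d: "d > 0" "\<forall>u. s < u \<and> u < s + d \<longrightarrow> g u < 0"
    using zeros[of s] gs0 sab by auto
  obtain u where u: "u \<in> T" "u < s + d" using near d(1) by blast
  have "s < u" using lowT[OF u(1)] u(1) gs0 by (cases "u = s") (auto simp: T_def)
  then show False using d u by (auto simp: T_def)
qed

lemma le_if_right_derivative_nonpos_above:
  fixes \<psi> :: "real \<Rightarrow> real"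
  assumes cont: "continuous_on {a..b} \<psi>"
    and der: "\<And>s. s \<in> {a..<b} \<Longrightarrow> (\<psi> has_real_derivative d s) (at s within {s..})"
    and nonpos: "\<And>s. s \<in> {a..<b} \<Longrightarrow> C \<le> \<psi> s \<Longrightarrow> d s \<le> 0"
    and init: "\<psi> a \<le> C"
    and t: "t \<in> {a..b}"
  shows "\<psi> t \<le> C"
proof -
  text \<open>The slack \<open>e\<close> makes the derivative strictly negative at the first crossing.\<close>
  have slack: "\<psi> t \<le> C + e * (t - a + 1)" if e: "e > 0" for e
  proof -
    define g where "g u = \<psi> u - C - e * (u - a) - e" for u
    have "\<exists>d>0. \<forall>u. s < u \<and> u < s + d \<longrightarrow> g u < 0" if s: "s \<in> {a..<b}" "g s = 0" for s
    proof -
      have "0 \<le> e * (s - a)" using s e by simp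
      then have "C \<le> \<psi> s" using s e unfolding g_def by linarith
      then have "d s - e < 0" using nonpos s e by force
      moreover have "(g has_real_derivative (d s - e)) (at s within {s..})"
        unfolding g_def by (auto intro!: derivative_eq_intros der s)
      ultimately obtain dd where dd: "dd > 0" "\<forall>h>0. s + h \<in> {s..} \<longrightarrow> h < dd \<longrightarrow> g s > g (s + h)"
        by (blast dest: has_real_derivative_neg_dec_right)
      have "g u < 0" if "s < u" "u < s + dd" for u
        using dd(2)[rule_format, of "u - s"] that s(2) by auto
      then show ?thesis using dd(1) by blast
    qed
    moreover have "continuous_on {a..b} g" unfolding g_def by (intro continuous_intros cont)
    moreover have "g a < 0" using init e by (simp add: g_def)
    ultimately have "g t \<le> 0" using nonpos_if_neg_right_of_zeros t by blast
    then show ?thesis by (simp add: g_def algebra_simps)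
  qed
  show ?thesis
  proof (rule ccontr)
    assume above: "\<not> \<psi> t \<le> C"
    moreover have "t - a + 1 > 0" using t by auto
    moreover define e where "e = (\<psi> t - C) / (2 * (t - a + 1))"
    ultimately have e: "e > 0" "2 * (e * (t - a + 1)) = \<psi> t - C"
      unfolding e_def by (simp_all add: field_simps)
    show False using slack[OF e(1)] above e(2) by linarith
  qed
qed

lemma exp_bound_if_right_derivative_bound:
  fixes W :: "real \<Rightarrow> real"
  assumes cont: "continuous_on {a..b} W"
    and der: "\<And>s. s \<in> {a..<b} \<Longrightarrow> (W has_real_derivative W' s) (at s within {s..})"
    and rate: "\<And>s. s \<in> {a..<b} \<Longrightarrow> exp (\<rho> * (s - a)) * W a \<le> W s \<Longrightarrow> W' s \<le> \<rho> * W s"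
    and t: "t \<in> {a..b}"
  shows "W t \<le> exp (\<rho> * (t - a)) * W a"
proof -
  define \<psi> where "\<psi> s = exp (- \<rho> * (s - a)) * W s" for s
  have exp_inv: "exp (\<rho> * (s - a)) * exp (- \<rho> * (s - a)) = 1" for s
    by (simp add: exp_add[symmetric])
  have "\<psi> t \<le> W a"
  proof (rule le_if_right_derivative_nonpos_above[OF _ _ _ _ t])
    show "continuous_on {a..b} \<psi>" unfolding \<psi>_def by (intro continuous_intros cont)
    fix s assume s: "s \<in> {a..<b}"
    show "(\<psi> has_real_derivative exp (- \<rho> * (s - a)) * (W' s - \<rho> * W s)) (at s within {s..})"
      unfolding \<psi>_def by (auto intro!: derivative_eq_intros der[OF s] simp: algebra_simps)
    assume "W a \<le> \<psi> s"
    then have "exp (\<rho> * (s - a)) * W a \<le> exp (\<rho> * (s - a)) * \<psi> s"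
      by (simp add: mult_left_mono)
    also have "\<dots> = W s" using exp_inv[of s] by (simp add: \<psi>_def mult.assoc[symmetric])
    finally have "exp (\<rho> * (s - a)) * W a \<le> W s" .
    then show "exp (- \<rho> * (s - a)) * (W' s - \<rho> * W s) \<le> 0"
      using rate[OF s] by (simp add: mult_nonneg_nonpos)
  qed (simp add: \<psi>_def)
  then have "exp (\<rho> * (t - a)) * \<psi> t \<le> exp (\<rho> * (t - a)) * W a"
    by (simp add: mult_left_mono)
  moreover have "exp (\<rho> * (t - a)) * \<psi> t = W t"
    using exp_inv[of t] by (simp add: \<psi>_def mult.assoc[symmetric])
  ultimately show ?thesis by simp
qed

text \<open>With \<open>\<Delta> = Delta_S h dur tk\<close> this is the union of the paper's intervals bar-H_n,
  over which the control is not updated.\<close>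
definition extended_dos_set :: "(nat \<Rightarrow> real) \<Rightarrow> (nat \<Rightarrow> real) \<Rightarrow> (nat \<Rightarrow> real) \<Rightarrow> real set" where
  "extended_dos_set h dur \<Delta> = (\<Union>n. {h n ..< h n + dur n + \<Delta> n})"

lemma extended_dos_set_sets: "extended_dos_set h dur \<Delta> \<in> sets lebesgue"
  unfolding extended_dos_set_def by (intro sets.countable_UN) auto

lemma Int_atLeastAtMost_lmeasurable:
  fixes B :: "real set"
  assumes "B \<in> sets lebesgue"
  shows "B \<inter> {a..b} \<in> lmeasurable"
  using fmeasurable_Int_fmeasurable[OF _ assms, of "{a..b}"]
  by (simp add: Int_commute)

lemma measure_Int_atLeastAtMost_mono:
  fixes B :: "real set"
  assumes "B \<in> sets lebesgue" "s \<le> t"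
  shows "measure lebesgue (B \<inter> {0..s}) \<le> measure lebesgue (B \<inter> {0..t})"
  using assms by (intro measure_mono_fmeasurable Int_atLeastAtMost_lmeasurable) auto

lemma measure_Int_atLeastAtMost_add:
  fixes B :: "real set"
  assumes B: "B \<in> sets lebesgue" and "0 \<le> s" "s \<le> t" and "{s..<t} \<subseteq> B"
  shows "measure lebesgue (B \<inter> {0..s}) + (t - s) \<le> measure lebesgue (B \<inter> {0..t})"
proof -
  have Bs: "B \<inter> {0..s} \<in> lmeasurable" and open_ivl: "{s<..<t} \<in> lmeasurable"
    using B by (auto intro: Int_atLeastAtMost_lmeasurable)
  have "measure lebesgue {s<..<t} = t - s"
    using assms by (subst measure_completion) auto
  then have "measure lebesgue (B \<inter> {0..s}) + (t - s) = measure lebesgue ((B \<inter> {0..s}) \<union> {s<..<t})"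
    using Bs open_ivl by (subst measure_Union) (auto simp: fmeasurable_def)
  also have "\<dots> \<le> measure lebesgue (B \<inter> {0..t})"
    using assms Bs open_ivl by (intro measure_mono_fmeasurable Int_atLeastAtMost_lmeasurable) auto
  finally show ?thesis .
qed

lemma measure_extended_dos_set_le:
  fixes h dur \<Delta> :: "nat \<Rightarrow> real"
  assumes h0: "0 \<le> h 0" and dur_pos: "\<And>n. 0 < dur n"
    and h_order: "\<And>n. h n + dur n \<le> h (Suc n)"
    and h_lim: "filterlim h at_top sequentially"
    and \<Delta>: "\<And>n. 0 \<le> \<Delta> n" "\<And>n. \<Delta> n \<le> D * dur n" and D: "0 \<le> D"
  shows "measure lebesgue (extended_dos_set h dur \<Delta> \<inter> {0..t}) \<le> (1 + D) * measure lebesgue (Xi h dur t)"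
proof -
  have h_mono: "strict_mono h"
    using h_order dur_pos by (intro strict_monoI_Suc) (smt (verit))
  have h_disj: "h n + dur n \<le> h m" if "n < m" for n m
    using h_order[of n] strict_mono_less_eq[OF h_mono, of "Suc n" m] that by simp
  have h_nonneg: "0 \<le> h n" for n
    using h0 strict_mono_less_eq[OF h_mono, of 0 n] by simp
  obtain N where N: "\<And>n. N \<le> n \<Longrightarrow> t < h n"
    using h_lim unfolding filterlim_at_top_dense eventually_sequentially by blast
  define H where "H n = {h n ..< h n + dur n} \<inter> {0..t}" for n
  define H' where "H' n = {h n ..< h n + dur n + \<Delta> n} \<inter> {0..t}" for n
  have H_fin: "H n \<in> lmeasurable" "H' n \<in> lmeasurable" for n
    unfolding H_def H'_def by (auto intro: Int_atLeastAtMost_lmeasurable)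
  text \<open>Only the finitely many intervals starting before \<open>t\<close> matter.\<close>
  have early: "n \<in> {..<N}" if "h n \<le> u" "u \<le> t" for n u
    using N[of n] that by force
  have ext_eq: "extended_dos_set h dur \<Delta> \<inter> {0..t} = (\<Union>n<N. H' n)"
    and Xi_eq: "Xi h dur t = (\<Union>n<N. H n)"
    unfolding extended_dos_set_def Xi_def dos_set_def dos_int_def H_def H'_def
    by (auto intro!: bexI[OF _ early])
  have H'_le: "measure lebesgue (H' n) \<le> (1 + D) * measure lebesgue (H n)" for n
  proof (cases "h n + dur n \<le> t")
    case True
    then have H_eq: "H n = {h n ..< h n + dur n}"
      using h_nonneg[of n] by (auto simp: H_def)
    have ivl: "{h n ..< h n + dur n + \<Delta> n} \<in> lmeasurable"
      by (rule bounded_set_imp_lmeasurable) auto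
    have "measure lebesgue (H' n) \<le> measure lebesgue {h n ..< h n + dur n + \<Delta> n}"
      unfolding H'_def by (rule measure_mono_fmeasurable[OF _ _ ivl]) auto
    also have "\<dots> = dur n + \<Delta> n"
      using dur_pos[of n] \<Delta>(1)[of n] by (simp add: measure_completion)
    also have "\<dots> \<le> (1 + D) * dur n"
      using \<Delta>(2)[of n] by (simp add: algebra_simps)
    also have "dur n = measure lebesgue (H n)"
      using dur_pos[of n] by (simp add: H_eq measure_completion)
    finally show ?thesis .
  next
    case False
    then have "H' n = H n" using \<Delta>(1)[of n] by (auto simp: H_def H'_def)
    then show ?thesis using D by (simp add: mult_le_cancel_right1)
  qed
  have "measure lebesgue (\<Union>n<N. H' n) \<le> (\<Sum>n<N. measure lebesgue (H' n))"
    using H_fin by (intro measure_UNION_le) auto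
  also have "\<dots> \<le> (1 + D) * (\<Sum>n<N. measure lebesgue (H n))"
    unfolding sum_distrib_left by (intro sum_mono H'_le)
  also have "(\<Sum>n<N. measure lebesgue (H n)) = measure lebesgue (\<Union>n<N. H n)"
  proof (rule measure_UNION'[symmetric])
    show "pairwise (\<lambda>i j. disjnt (H i) (H j)) {..<N}"
      unfolding pairwise_def disjnt_def H_def
      by (fastforce dest: h_disj simp: linorder_neq_iff)
  qed (use H_fin in auto)
  finally show ?thesis unfolding ext_eq Xi_eq .
qed

lemma exp_measure_weight_le:
  fixes B :: "real set" and a R :: real
  defines "E t \<equiv> - a * t + R * measure lebesgue (B \<inter> {0..t})"
  assumes B: "B \<in> sets lebesgue" and R: "0 \<le> R" and st: "s \<le> t"
  shows exp_measure_weight_decay: "exp (- a * (t - s)) * exp (E s) \<le> exp (E t)"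
    and exp_measure_weight_grow: "0 \<le> s \<Longrightarrow> {s..<t} \<subseteq> B \<Longrightarrow> exp ((R - a) * (t - s)) * exp (E s) \<le> exp (E t)"
proof -
  have "R * measure lebesgue (B \<inter> {0..s}) \<le> R * measure lebesgue (B \<inter> {0..t})"
    using measure_Int_atLeastAtMost_mono[OF B st] R by (rule mult_left_mono)
  then show "exp (- a * (t - s)) * exp (E s) \<le> exp (E t)"
    unfolding E_def mult_exp_exp by (simp add: algebra_simps)
  assume "0 \<le> s" "{s..<t} \<subseteq> B"
  then have "R * (measure lebesgue (B \<inter> {0..s}) + (t - s)) \<le> R * measure lebesgue (B \<inter> {0..t})"
    using measure_Int_atLeastAtMost_add[OF B] st R by (intro mult_left_mono) auto
  then show "exp ((R - a) * (t - s)) * exp (E s) \<le> exp (E t)"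
    unfolding E_def mult_exp_exp by (simp add: algebra_simps)
qed

lemma exp_bound_by_measure_piecewise:
  fixes W :: "real \<Rightarrow> real" and tk :: "nat \<Rightarrow> real" and B :: "real set"
  assumes tk: "strict_mono tk" "tk 0 = 0" "filterlim tk at_top sequentially"
    and B: "B \<in> sets lebesgue" and R: "0 \<le> R" and W0: "0 \<le> W 0"
    and step: "\<And>j t. tk j \<le> t \<Longrightarrow> t \<le> tk (Suc j) \<Longrightarrow>
        W t \<le> exp (- a * (t - tk j)) * W (tk j) \<or>
        (\<exists>s. 0 \<le> s \<and> s \<le> tk j \<and> {s..<t} \<subseteq> B \<and> W t \<le> exp ((R - a) * (t - s)) * W s)"
    and t: "0 \<le> t"
  shows "W t \<le> exp (- a * t + R * measure lebesgue (B \<inter> {0..t})) * W 0"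
proof -
  define G where "G t = exp (- a * t + R * measure lebesgue (B \<inter> {0..t})) * W 0" for t
  have G_decay: "exp (- a * (t - s)) * G s \<le> G t" if "s \<le> t" for s t
    using mult_right_mono[OF exp_measure_weight_decay[OF B R that] W0]
    by (simp add: G_def mult.assoc)
  have G_grow: "exp ((R - a) * (t - s)) * G s \<le> G t" if "0 \<le> s" "s \<le> t" "{s..<t} \<subseteq> B" for s t
    using mult_right_mono[OF exp_measure_weight_grow[OF B R that(2,1,3)] W0]
    by (simp add: G_def mult.assoc)
  have tk_nonneg: "0 \<le> tk j" for j
    using tk strict_mono_less_eq[OF tk(1), of 0 j] by simp
  have "\<forall>t\<in>{0..tk j}. W t \<le> G t" for j
  proof (induction j)
    case 0
    have "1 \<le> exp (R * measure lebesgue (B \<inter> {0..0}))" using R by simp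
    then have "W 0 \<le> G 0" using W0 mult_right_mono[of 1 _ "W 0"] by (simp add: G_def)
    then show ?case using tk(2) by simp
  next
    case (Suc j)
    show ?case
    proof
      fix t assume t: "t \<in> {0..tk (Suc j)}"
      show "W t \<le> G t"
      proof (cases "t \<le> tk j")
        case True
        then show ?thesis using Suc.IH t by auto
      next
        case False
        then have "tk j \<le> t" "t \<le> tk (Suc j)" using t by auto
        from step[OF this] show ?thesis
        proof (elim disjE exE conjE)
          assume "W t \<le> exp (- a * (t - tk j)) * W (tk j)"
          also have "\<dots> \<le> exp (- a * (t - tk j)) * G (tk j)"
            using Suc.IH tk_nonneg[of j] by (intro mult_left_mono) auto
          also have "\<dots> \<le> G t" using G_decay \<open>tk j \<le> t\<close> .
          finally show ?thesis .
        next
          fix s assume s: "0 \<le> s" "s \<le> tk j" "{s..<t} \<subseteq> B"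
          assume "W t \<le> exp ((R - a) * (t - s)) * W s"
          also have "\<dots> \<le> exp ((R - a) * (t - s)) * G s"
            using Suc.IH s by (intro mult_left_mono) auto
          also have "\<dots> \<le> G t" using G_grow s \<open>tk j \<le> t\<close> by simp
          finally show ?thesis .
        qed
      qed
    qed
  qed
  moreover obtain j where "t \<le> tk j"
    using tk(3) unfolding filterlim_at_top eventually_sequentially by blast
  ultimately show ?thesis using t by (auto simp: G_def)
qed

lemma strict_mono_obtain_interval:
  fixes tk :: "nat \<Rightarrow> real"
  assumes tk: "strict_mono tk" and s: "tk i \<le> s" "s < tk (Suc j)"
  obtains l where "i \<le> l" "l \<le> j" "tk l \<le> s" "s < tk (Suc l)"
proof -
  define n where "n = (LEAST n. s < tk n)"
  have n: "s < tk n" "n \<le> Suc j"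
    using LeastI[of "\<lambda>n. s < tk n", OF s(2)] Least_le[of "\<lambda>n. s < tk n", OF s(2)]
    by (simp_all add: n_def)
  have "i < n"
    using n(1) s(1) strict_mono_less_eq[OF tk, of n i] by (metis not_le order.trans)
  then obtain l where l: "n = Suc l" by (cases n) auto
  have "tk l \<le> s" using not_less_Least[of l "\<lambda>n. s < tk n"] l by (simp add: n_def)
  then show ?thesis using \<open>i < n\<close> n l by (intro that) auto
qed

lemma obtain_run_start:
  assumes "P (j::nat)"
  obtains i where "i \<le> j" "\<forall>q\<in>{i..j}. P q" "0 < i \<Longrightarrow> \<not> P (i - 1)"
proof -
  define Q where "Q i \<longleftrightarrow> (\<forall>q\<in>{i..j}. P q)" for i
  define i where "i = (LEAST i. Q i)"
  have Qj: "Q j" using assms by (simp add: Q_def)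
  have "Q i" "i \<le> j"
    unfolding i_def using LeastI[of Q, OF Qj] Least_le[of Q, OF Qj] by auto
  moreover have "\<not> P (i - 1)" if "0 < i"
  proof
    assume "P (i - 1)"
    have "Q (i - 1)" unfolding Q_def
    proof
      fix q assume "q \<in> {i - 1..j}"
      then have "q = i - 1 \<or> q \<in> {i..j}" by auto
      then show "P q" using \<open>P (i - 1)\<close> \<open>Q i\<close> by (auto simp: Q_def)
    qed
    then show False using not_less_Least[of "i - 1" Q] that by (simp add: i_def)
  qed
  ultimately show ?thesis using that by (simp add: Q_def)
qed

lemma held_sample_after_run:
  fixes tk :: "nat \<Rightarrow> real"
  assumes tk: "strict_mono tk" "0 \<le> tk 0" and s: "tk l \<le> s" "s < tk (Suc l)"
    and i: "i \<le> Suc l" and run: "\<forall>q\<in>{i..l}. tk q \<in> dos_set h dur"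
    and start: "0 < i \<Longrightarrow> tk (i - 1) \<notin> dos_set h dur"
  shows "held_sample x h dur tk s = (if i = 0 then 0 else x (tk (i - 1)))"
proof -
  have "tk k \<le> s \<longleftrightarrow> k \<le> l" for k
  proof
    assume "tk k \<le> s"
    then show "k \<le> l" using s(2) strict_mono_less[OF tk(1), of k "Suc l"] by simp
  next
    assume "k \<le> l"
    then show "tk k \<le> s" using s(1) strict_mono_less_eq[OF tk(1), of k l] by simp
  qed
  moreover have "0 \<le> tk k" for k using tk strict_mono_less_eq[OF tk(1), of 0 k] by simp
  ultimately have succ: "succ_upd h dur tk s = {k. k \<le> l \<and> tk k \<notin> dos_set h dur}"
    by (auto simp: succ_upd_def Theta_def)
  have below: "k < i" if "k \<in> succ_upd h dur tk s" for k
  proof (rule ccontr)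
    assume "\<not> k < i"
    then have "tk k \<in> dos_set h dur" using that run unfolding succ by auto
    then show False using that unfolding succ by simp
  qed
  show ?thesis
  proof (cases "i = 0")
    case True
    then show ?thesis using below by (auto simp: held_sample_def)
  next
    case False
    then have "i - 1 \<in> succ_upd h dur tk s" using i start unfolding succ by auto
    moreover have "Max (succ_upd h dur tk s) = i - 1"
    proof (rule Max_eqI)
      show "finite (succ_upd h dur tk s)" by (simp add: succ)
      show "k \<le> i - 1" if "k \<in> succ_upd h dur tk s" for k using below[OF that] by simp
    qed fact
    ultimately show ?thesis using False by (auto simp: held_sample_def)
  qed
qed

lemma Delta_S_upper:
  assumes tk: "filterlim tk at_top sequentially" and l: "tk l \<in> dos_int h dur n"
  shows "tk (Suc l) - tk l \<le> Delta_S h dur tk n"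
proof -
  define K where "K = {k. tk k \<in> dos_int h dur n}"
  obtain N where N: "\<And>k. N \<le> k \<Longrightarrow> h n + dur n \<le> tk k"
    using tk unfolding filterlim_at_top eventually_sequentially by blast
  have "K \<subseteq> {..<N}"
  proof
    fix k assume "k \<in> K"
    then have "tk k < h n + dur n" by (simp add: K_def dos_int_def)
    then show "k \<in> {..<N}" using N[of k] by force
  qed
  then have "finite K" by (rule finite_subset) simp
  moreover have "l \<in> K" using l by (simp add: K_def)
  ultimately show ?thesis
    unfolding Delta_S_def K_def[symmetric] by (auto intro: cSup_upper)
qed

lemma Delta_S_nonneg:
  assumes "strict_mono tk" "filterlim tk at_top sequentially"
  shows "0 \<le> Delta_S h dur tk n"
proof (cases "{k. tk k \<in> dos_int h dur n} = {}")
  case True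
  then show ?thesis by (simp add: Delta_S_def)
next
  case False
  then obtain l where "tk l \<in> dos_int h dur n" by auto
  then show ?thesis
    using Delta_S_upper[OF assms(2)] strict_monoD[OF assms(1), of l "Suc l"] by fastforce
qed

lemma dos_run_subset_extended_dos_set:
  assumes tk: "strict_mono tk" "filterlim tk at_top sequentially"
    and run: "\<forall>q\<in>{i..j}. tk q \<in> dos_set h dur"
  shows "{tk i..<tk (Suc j)} \<subseteq> extended_dos_set h dur (Delta_S h dur tk)"
proof
  fix u assume "u \<in> {tk i..<tk (Suc j)}"
  then obtain l where l: "i \<le> l" "l \<le> j" "tk l \<le> u" "u < tk (Suc l)"
    by (auto elim: strict_mono_obtain_interval[OF tk(1)])
  have "tk l \<in> dos_set h dur" using run l by simp
  then obtain n where n: "tk l \<in> dos_int h dur n"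
    by (auto simp: dos_set_def)
  then have "tk (Suc l) - tk l \<le> Delta_S h dur tk n"
    by (rule Delta_S_upper[OF tk(2)])
  then have "u \<in> {h n ..< h n + dur n + Delta_S h dur tk n}"
    using n l by (auto simp: dos_int_def)
  then show "u \<in> extended_dos_set h dur (Delta_S h dur tk)"
    by (auto simp: extended_dos_set_def)
qed

lemma le_Sup_div_Inf_mult:
  fixes g d :: "nat \<Rightarrow> real"
  assumes g: "bdd_above (range g)" "\<And>n. 0 \<le> g n"
    and d: "\<And>n. 0 < d n" "0 < Inf (range d)"
  shows "g n \<le> Sup (range g) / Inf (range d) * d n"
proof -
  have "Inf (range d) \<le> d n"
    using d(1) by (intro cInf_lower bdd_belowI[of _ 0]) (auto intro: less_imp_le)
  moreover have "0 \<le> Sup (range g)"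
    using g cSup_upper[OF _ g(1), of "g 0"] by (meson order.trans rangeI)
  ultimately have "Sup (range g) \<le> Sup (range g) / Inf (range d) * d n"
    using d(2) by (simp add: field_simps mult_right_mono)
  then show ?thesis using cSup_upper[OF _ g(1), of "g n"] by simp
qed

lemma measure_extended_dos_set_Delta_S_le:
  assumes h0: "0 \<le> h 0" and dur_pos: "\<And>n. 0 < dur n"
    and h_order: "\<And>n. h n + dur n \<le> h (Suc n)"
    and h_lim: "filterlim h at_top sequentially"
    and tk: "strict_mono tk" "filterlim tk at_top sequentially"
    and Delta_bdd: "bdd_above (range (Delta_S h dur tk))" and dur_inf: "0 < Inf (range dur)"
    and Xi_le: "measure lebesgue (Xi h dur t) \<le> M"
  shows "measure lebesgue (extended_dos_set h dur (Delta_S h dur tk) \<inter> {0..t})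
    \<le> (1 + Sup (range (Delta_S h dur tk)) / Inf (range dur)) * M"
proof -
  define D where "D = Sup (range (Delta_S h dur tk)) / Inf (range dur)"
  have Delta_le: "Delta_S h dur tk n \<le> D * dur n" for n
    unfolding D_def using Delta_S_nonneg[OF tk] dur_pos dur_inf
    by (intro le_Sup_div_Inf_mult[OF Delta_bdd]) auto
  have "0 \<le> D * dur 0" using Delta_le[of 0] Delta_S_nonneg[OF tk] order.trans by blast
  then have "0 \<le> D" using dur_pos[of 0] by (simp add: zero_le_mult_iff)
  then have "measure lebesgue (extended_dos_set h dur (Delta_S h dur tk) \<inter> {0..t})
      \<le> (1 + D) * measure lebesgue (Xi h dur t)"
    by (intro measure_extended_dos_set_le[OF h0 dur_pos h_order h_lim Delta_S_nonneg[OF tk] Delta_le])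
  also have "\<dots> \<le> (1 + D) * M"
    using Xi_le \<open>0 \<le> D\<close> by (intro mult_left_mono) auto
  finally show ?thesis unfolding D_def .
qed

locale dos_event_triggered_loop =
  fixes f :: "'a::real_normed_vector \<Rightarrow> 'u \<Rightarrow> 'a"
    and kfb :: "'a \<Rightarrow> 'u"
    and V :: "'a \<Rightarrow> real"
    and DV :: "'a \<Rightarrow> 'a \<Rightarrow> real"
    and \<alpha>1 \<gamma>2 :: "real \<Rightarrow> real"
    and lam c \<mu> :: real
    and h dur tk :: "nat \<Rightarrow> real"
    and x :: "real \<Rightarrow> 'a"
  assumes K1: "class_K_inf \<alpha>1" and K3: "class_K_inf \<gamma>2"
    and lam: "0 < lam" and c: "0 < c" "c < 1" and \<mu>: "0 < \<mu>"
    and Vder: "\<And>z. (V has_derivative DV z) (at z)"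
    and V_lower: "\<And>z. \<alpha>1 (norm z) \<le> V z"
    and ISS: "\<And>z e. DV z (f z (kfb (z + e))) \<le> - lam * V z + \<gamma>2 (norm e)"
    and \<gamma>2_le_\<alpha>1: "\<And>r. 0 \<le> r \<Longrightarrow> \<gamma>2 (4 * r) \<le> \<mu> * \<alpha>1 r"
    and t0: "tk 0 = 0" and t_mono: "strict_mono tk"
    and t_unb: "filterlim tk at_top sequentially"
    and trig: "\<And>k. tk k \<notin> dos_set h dur \<Longrightarrow>
        {s. s > tk k \<and> \<not> (\<gamma>2 (4 * norm (x (tk k) - x s)) \<le> lam * (1 - c) * V (x s))} \<noteq> {} \<Longrightarrow>
        tk (Suc k) = Inf {s. s > tk k \<and> \<not> (\<gamma>2 (4 * norm (x (tk k) - x s)) \<le> lam * (1 - c) * V (x s))}"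
    and x_cont: "continuous_on {0..} x"
    and x_ode: "\<And>t. 0 \<le> t \<Longrightarrow>
        (x has_vector_derivative f (x t) (kfb (held_sample x h dur tk t))) (at t within {t..})"
begin

lemma V_nonneg: "0 \<le> V z"
  using V_lower[of z] class_K_inf_nonneg[OF K1, of "norm z"] by simp

lemma tk_nonneg: "0 \<le> tk k"
  using strict_mono_less_eq[OF t_mono, of 0 k] t0 by simp

lemma continuous_on_V_x: "0 \<le> a \<Longrightarrow> continuous_on {a..b} (\<lambda>s. V (x s))"
  using continuous_on_compose2[OF _ continuous_on_subset[OF x_cont], of UNIV V "{a..b}"]
    has_derivative_continuous[OF Vder]
  by (auto intro: continuous_at_imp_continuous_on)

lemma V_x_has_derivative:
  assumes "0 \<le> s"
  shows "((\<lambda>s. V (x s)) has_real_derivative DV (x s) (f (x s) (kfb (held_sample x h dur tk s))))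
           (at s within {s..})"
  using vector_derivative_diff_chain_within[OF x_ode[OF assms] has_derivative_at_withinI[OF Vder]]
  by (simp add: has_real_derivative_iff_has_vector_derivative comp_def)

lemma ISS_decay:
  assumes "\<gamma>2 (4 * norm (w - z)) \<le> lam * (1 - c) * V z"
  shows "DV z (f z (kfb w)) \<le> - (c * lam) * V z"
  using ISS[of z "w - z"] class_K_inf_mono[OF K3, of "norm (w - z)" "4 * norm (w - z)"] assms
  by (simp add: algebra_simps)

lemma \<gamma>2_le_V: "\<gamma>2 (4 * norm z) \<le> \<mu> * V z"
  using \<gamma>2_le_\<alpha>1[of "norm z"] V_lower[of z] \<mu> by (smt (verit) mult_left_mono norm_ge_zero)

lemma ISS_growth:
  assumes held: "w = 0 \<or> \<gamma>2 (4 * norm (w - z0)) \<le> lam * (1 - c) * V z0"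
    and grown: "V z0 \<le> V z"
  shows "DV z (f z (kfb w)) \<le> (lam + 2 * \<mu> - c * lam) * V z"
proof -
  have "\<gamma>2 (norm (w - z)) \<le> lam * (1 - c) * V z + \<mu> * V z"
  proof (cases "w = 0")
    case True
    then have "\<gamma>2 (norm (w - z)) \<le> \<gamma>2 (4 * norm z)"
      by (intro class_K_inf_mono[OF K3]) auto
    then show ?thesis using \<gamma>2_le_V[of z] V_nonneg[of z] lam c
      by (smt (verit) mult_nonneg_nonneg)
  next
    case False
    define a b where "a = norm (w - z0)" and "b = norm (z0 - z)"
    text \<open>Split the error at \<open>z0\<close>, where the held sample satisfied the triggering rule;
      \<open>z'\<close> is whichever of \<open>z0\<close>, \<open>z\<close> has the larger norm.\<close>
    obtain z' where z': "b \<le> 2 * norm z'" "V z' \<le> V z"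
      using norm_triangle_ineq4[of z0 z] grown unfolding b_def
      by (metis add_mono mult_2 nle_le order.trans)
    have "norm (w - z) \<le> a + b"
      unfolding a_def b_def by (rule norm_diff_triangle_le) auto
    then have "\<gamma>2 (norm (w - z)) \<le> \<gamma>2 (a + b)"
      by (intro class_K_inf_mono[OF K3]) auto
    moreover have "\<gamma>2 (a + b) \<le> \<gamma>2 (2 * a) + \<gamma>2 (2 * b)"
      by (rule class_K_inf_add_le[OF K3]) (auto simp: a_def b_def)
    moreover have "\<gamma>2 (2 * a) \<le> lam * (1 - c) * V z0"
      using held False class_K_inf_mono[OF K3, of "2 * a" "4 * a"] unfolding a_def by auto
    moreover have "\<gamma>2 (2 * b) \<le> \<gamma>2 (4 * norm z')"
      using z'(1) by (intro class_K_inf_mono[OF K3]) (auto simp: b_def)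
    moreover have "lam * (1 - c) * V z0 \<le> lam * (1 - c) * V z"
      using grown lam c by (intro mult_left_mono) auto
    moreover have "\<mu> * V z' \<le> \<mu> * V z"
      using z'(2) \<mu> by (intro mult_left_mono) auto
    ultimately show ?thesis using \<gamma>2_le_V[of z'] by linarith
  qed
  moreover have "0 \<le> lam * V z" "0 \<le> \<mu> * V z"
    using V_nonneg[of z] lam \<mu> by simp_all
  ultimately show ?thesis
    using ISS[of z "w - z"] by (simp add: algebra_simps)
qed

lemma trigger_condition_holds:
  assumes j: "tk j \<notin> dos_set h dur" and s: "s \<in> {tk j..tk (Suc j)}"
  shows "\<gamma>2 (4 * norm (x (tk j) - x s)) \<le> lam * (1 - c) * V (x s)"
proof -
  define F where "F s = lam * (1 - c) * V (x s) - \<gamma>2 (4 * norm (x (tk j) - x s))" for s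
  have inside: "0 \<le> F s" if "tk j < s" "s < tk (Suc j)" for s
  proof (rule ccontr)
    define S where "S = {s. s > tk j \<and> \<not> (\<gamma>2 (4 * norm (x (tk j) - x s)) \<le> lam * (1 - c) * V (x s))}"
    assume "\<not> 0 \<le> F s"
    then have "s \<in> S" using that by (auto simp: S_def F_def)
    then have "Inf S \<le> s" by (intro cInf_lower bdd_belowI[of _ "tk j"]) (auto simp: S_def)
    moreover have "tk (Suc j) = Inf S" using trig[OF j] \<open>s \<in> S\<close> unfolding S_def by blast
    ultimately show False using that by simp
  qed
  have lt: "tk j < tk (Suc j)" using t_mono by (simp add: strict_mono_less)
  have "continuous_on {tk j..tk (Suc j)} x"
    by (rule continuous_on_subset[OF x_cont]) (use tk_nonneg in auto)
  then have err: "continuous_on {tk j..tk (Suc j)} (\<lambda>s. 4 * norm (x (tk j) - x s))"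
    by (intro continuous_intros)
  have "continuous_on {0..} \<gamma>2" using K3 by (simp add: class_K_inf_def)
  from continuous_on_compose2[OF this err]
  have "continuous_on {tk j..tk (Suc j)} (\<lambda>s. \<gamma>2 (4 * norm (x (tk j) - x s)))"
    by (simp add: image_subset_iff)
  then have "continuous_on {tk j..tk (Suc j)} F"
    unfolding F_def by (intro continuous_on_diff continuous_on_mult_left continuous_on_V_x tk_nonneg)
  then have "continuous_on (closure {tk j<..<tk (Suc j)}) F"
    using lt by simp
  then have "0 \<le> F s"
  proof (rule continuous_ge_on_closure)
    show "s \<in> closure {tk j<..<tk (Suc j)}" using lt s by simp
  qed (use inside in auto)
  then show ?thesis by (simp add: F_def)
qed

lemma decay_after_update:
  assumes j: "tk j \<notin> dos_set h dur" and t: "t \<in> {tk j..tk (Suc j)}"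
  shows "V (x t) \<le> exp (- (c * lam) * (t - tk j)) * V (x (tk j))"
proof (rule exp_bound_if_right_derivative_bound[OF continuous_on_V_x[OF tk_nonneg] _ _ t])
  fix s assume s: "s \<in> {tk j..<tk (Suc j)}"
  then have "held_sample x h dur tk s = x (tk j)"
    using held_sample_after_run[OF t_mono, of j s "Suc j"] j t0 by auto
  moreover have "\<gamma>2 (4 * norm (x (tk j) - x s)) \<le> lam * (1 - c) * V (x s)"
    using trigger_condition_holds[OF j] s by auto
  ultimately show "DV (x s) (f (x s) (kfb (held_sample x h dur tk s))) \<le> - (c * lam) * V (x s)"
    using ISS_decay by (simp add: norm_minus_commute)
next
  fix s assume "s \<in> {tk j..<tk (Suc j)}"
  then show "((\<lambda>s. V (x s)) has_real_derivative DV (x s) (f (x s) (kfb (held_sample x h dur tk s))))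
      (at s within {s..})"
    using tk_nonneg[of j] by (intro V_x_has_derivative) auto
qed

lemma growth_during_dos:
  assumes run: "\<forall>q\<in>{i..j}. tk q \<in> dos_set h dur"
    and start: "0 < i \<Longrightarrow> tk (i - 1) \<notin> dos_set h dur"
    and t: "t \<in> {tk i..tk (Suc j)}"
  shows "V (x t) \<le> exp ((lam + 2 * \<mu> - c * lam) * (t - tk i)) * V (x (tk i))"
proof -
  define z where "z = (if i = 0 then 0 else x (tk (i - 1)))"
  have held: "held_sample x h dur tk s = z" if s: "s \<in> {tk i..<tk (Suc j)}" for s
  proof -
    obtain l where l: "i \<le> l" "l \<le> j" "tk l \<le> s" "s < tk (Suc l)"
      by (rule strict_mono_obtain_interval[OF t_mono, of i s j]) (use s in auto)
    then show ?thesis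
      using held_sample_after_run[OF t_mono _ l(3,4), where i=i and h=h and dur=dur and x=x] run start t0 unfolding z_def by auto
  qed
  text \<open>The sample held during the attack was taken when the triggering rule last held,
    at the end of the last successful update interval.\<close>
  have z: "z = 0 \<or> \<gamma>2 (4 * norm (z - x (tk i))) \<le> lam * (1 - c) * V (x (tk i))"
  proof (cases "i = 0")
    case False
    then have "Suc (i - 1) = i" by simp
    then show ?thesis
      using trigger_condition_holds[OF start] False strict_mono_less_eq[OF t_mono, of "i - 1" i]
      unfolding z_def by force
  qed (simp add: z_def)
  show ?thesis
  proof (rule exp_bound_if_right_derivative_bound[OF continuous_on_V_x[OF tk_nonneg] _ _ t])
    fix s assume s: "s \<in> {tk i..<tk (Suc j)}"
    show "((\<lambda>s. V (x s)) has_real_derivative DV (x s) (f (x s) (kfb (held_sample x h dur tk s))))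
        (at s within {s..})"
      using s tk_nonneg[of i] by (intro V_x_has_derivative) auto
    have "c * lam < lam" using c lam by simp
    then have "1 \<le> exp ((lam + 2 * \<mu> - c * lam) * (s - tk i))"
      using s \<mu> by (simp add: mult_nonneg_nonneg)
    then have "V (x (tk i)) \<le> exp ((lam + 2 * \<mu> - c * lam) * (s - tk i)) * V (x (tk i))"
      using mult_right_mono[OF _ V_nonneg] by fastforce
    also assume "exp ((lam + 2 * \<mu> - c * lam) * (s - tk i)) * V (x (tk i)) \<le> V (x s)"
    finally have "V (x (tk i)) \<le> V (x s)" .
    then show "DV (x s) (f (x s) (kfb (held_sample x h dur tk s))) \<le> (lam + 2 * \<mu> - c * lam) * V (x s)"
      using ISS_growth z held[OF s] by simp
  qed
qed

lemma Lyapunov_bound: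
  assumes "0 \<le> t"
  shows "V (x t) \<le> exp (- (c * lam) * t
      + (lam + 2 * \<mu>) * measure lebesgue (extended_dos_set h dur (Delta_S h dur tk) \<inter> {0..t})) * V (x 0)"
proof (rule exp_bound_by_measure_piecewise[OF t_mono t0 t_unb extended_dos_set_sets _ V_nonneg _ assms])
  show "0 \<le> lam + 2 * \<mu>" using lam \<mu> by simp
  fix j t assume t: "tk j \<le> t" "t \<le> tk (Suc j)"
  show "V (x t) \<le> exp (- (c * lam) * (t - tk j)) * V (x (tk j)) \<or>
    (\<exists>s. 0 \<le> s \<and> s \<le> tk j \<and> {s..<t} \<subseteq> extended_dos_set h dur (Delta_S h dur tk) \<and>
      V (x t) \<le> exp ((lam + 2 * \<mu> - c * lam) * (t - s)) * V (x s))"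
  proof (cases "tk j \<in> dos_set h dur")
    case False
    then show ?thesis using decay_after_update t by auto
  next
    case True
    then obtain i where i: "i \<le> j" "\<forall>q\<in>{i..j}. tk q \<in> dos_set h dur"
      "0 < i \<Longrightarrow> tk (i - 1) \<notin> dos_set h dur"
      using obtain_run_start[of "\<lambda>q. tk q \<in> dos_set h dur", OF True] by blast
    have "{tk i..<t} \<subseteq> extended_dos_set h dur (Delta_S h dur tk)"
      using dos_run_subset_extended_dos_set[OF t_mono t_unb i(2)] t by auto
    moreover have "tk i \<le> tk j" using i(1) t_mono by (simp add: strict_mono_less_eq)
    moreover have "V (x t) \<le> exp ((lam + 2 * \<mu> - c * lam) * (t - tk i)) * V (x (tk i))"
      using growth_during_dos[OF i(2,3)] t calculation(2) by auto
    ultimately show ?thesis using tk_nonneg by blast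
  qed
qed

end

theorem theorem2:
  fixes f :: "real ^ 'n \<Rightarrow> real ^ 'm \<Rightarrow> real ^ 'n"
    and kfb :: "real ^ 'n \<Rightarrow> real ^ 'm"
    and V :: "real ^ 'n \<Rightarrow> real"
    and DV :: "real ^ 'n \<Rightarrow> real ^ 'n \<Rightarrow> real"
    and \<alpha>1 \<alpha>2 \<gamma>2 :: "real \<Rightarrow> real"
    and lam c \<kappa> \<tau> \<mu> :: real
    and h dur :: "nat \<Rightarrow> real"
    and tk :: "nat \<Rightarrow> real"
    and x :: "real \<Rightarrow> real ^ 'n"
  assumes K1: "class_K_inf \<alpha>1" and K2: "class_K_inf \<alpha>2" and K3: "class_K_inf \<gamma>2"
    and lam: "lam > 0"
    and Vder: "\<And>z. (V has_derivative DV z) (at z)"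
    and Vbounds: "\<And>z. \<alpha>1 (norm z) \<le> V z \<and> V z \<le> \<alpha>2 (norm z)"
    and ISS: "\<And>z e. DV z (f z (kfb (z + e))) \<le> - lam * V z + \<gamma>2 (norm e)"
    and c: "0 < c" "c < 1"
    \<comment> \<open>DoS pattern: off/on transitions h_n, durations dur_n\<close>
    and h0: "h 0 \<ge> 0"
    and dur_pos: "\<And>n. dur n > 0"
    and h_order: "\<And>n. h n + dur n \<le> h (Suc n)"
    \<comment> \<open>(A1)\<close>
    and A1a: "filterlim h at_top sequentially"
    and A1b: "\<kappa> \<ge> 0" "\<tau> > 0"
    and A1c: "\<And>t. t \<ge> 0 \<Longrightarrow> measure lebesgue (Xi h dur t) \<le> \<kappa> + t / \<tau>"
    \<comment> \<open>(A2)\<close>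
    and A2: "\<mu> > 0" "\<And>r. r \<ge> 0 \<Longrightarrow> \<gamma>2 (4 * r) \<le> \<mu> * \<alpha>1 r"
    \<comment> \<open>control update / attempt times\<close>
    and t0: "tk 0 = 0"
    and t_mono: "strict_mono tk"
    and t_unb: "filterlim tk at_top sequentially"
    and trig: "\<And>k. tk k \<notin> dos_set h dur \<Longrightarrow>
        {s. s > tk k \<and> \<not> (\<gamma>2 (4 * norm (x (tk k) - x s)) \<le> lam * (1 - c) * V (x s))} \<noteq> {} \<Longrightarrow>
        tk (Suc k) = Inf {s. s > tk k \<and> \<not> (\<gamma>2 (4 * norm (x (tk k) - x s)) \<le> lam * (1 - c) * V (x s))}"
    \<comment> \<open>Delta_* and tau_*\<close>
    and Dbdd: "bdd_above (range (Delta_S h dur tk))"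
    and tau_star_pos: "Inf (range dur) > 0"
    \<comment> \<open>closed-loop solution\<close>
    and x_cont: "continuous_on {0..} x"
    and x_ode: "\<And>t. t \<ge> 0 \<Longrightarrow>
        (x has_vector_derivative f (x t) (kfb (held_sample x h dur tk t))) (at t within {t..})"
    and gain: "\<tau> > c * lam / (lam + 2 * \<mu>) *
                   (1 + Sup (range (Delta_S h dur tk)) / Inf (range dur))"
  shows "\<forall>t \<ge> 0. norm (x t) \<le> the_inv_into {0..} \<alpha>1
          (exp (\<kappa> * (lam + 2 * \<mu>) * (1 + Sup (range (Delta_S h dur tk)) / Inf (range dur)))
           * exp (- (c * lam - (lam + 2 * \<mu>) / \<tau> * (1 + Sup (range (Delta_S h dur tk)) / Inf (range dur))) * t)
           * \<alpha>2 (norm (x 0)))"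
proof -
  text \<open>The hypothesis \<open>gain\<close> only makes the exponent beta positive; the bound holds without it.\<close>
  interpret dos_event_triggered_loop f kfb V DV \<alpha>1 \<gamma>2 lam c \<mu> h dur tk x
    by (unfold_locales; (rule ISS)?) (simp_all add: assms Vbounds)
  define D where "D = Sup (range (Delta_S h dur tk)) / Inf (range dur)"
  define R where "R = lam + 2 * \<mu>"
  have "\<alpha>1 (norm (x t)) \<le> exp (\<kappa> * R * (1 + D)) * exp (- (c * lam - R / \<tau> * (1 + D)) * t)
      * \<alpha>2 (norm (x 0))" if t: "0 \<le> t" for t
  proof -
    have "R * measure lebesgue (extended_dos_set h dur (Delta_S h dur tk) \<inter> {0..t})
        \<le> R * ((1 + D) * (\<kappa> + t / \<tau>))"
      unfolding D_def R_def using lam A2(1)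
      by (intro mult_left_mono measure_extended_dos_set_Delta_S_le
          h0 dur_pos h_order A1a t_mono t_unb Dbdd tau_star_pos A1c[OF t]) auto
    then have "V (x t) \<le> exp (- (c * lam) * t + R * ((1 + D) * (\<kappa> + t / \<tau>))) * V (x 0)"
      using Lyapunov_bound[OF t] V_nonneg[of "x 0"] unfolding R_def
      by (smt (verit) exp_le_cancel_iff mult_right_mono)
    also have "\<dots> \<le> exp (- (c * lam) * t + R * ((1 + D) * (\<kappa> + t / \<tau>))) * \<alpha>2 (norm (x 0))"
      using Vbounds[of "x 0"] by (simp add: mult_left_mono)
    finally show ?thesis
      using V_lower[of "x t"] by (simp add: mult_exp_exp field_simps)
  qed
  then show ?thesis
    using class_K_inf_le_the_inv_into[OF K1] class_K_inf_nonneg[OF K2]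
    unfolding D_def R_def by simp
qed

end
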